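(* Let $Q$ be a locally point symmetric convex polytope in $\mathbb{R}^D$, and let $\mathbf{k} \in Q-Q$. The following statements are equivalent: (i) $Q\cap (Q-\mathbf{k})$ consists of a single point, i.e., $\mathbf{k}$ is a uniquely formed difference in $Q-Q$; (ii) $\mathbf{k}$ is a vertex of the polytope $Q-Q$; (iii) $\mathbf{k} = \mathbf{u}-\mathbf{v}$ for some strictly antipodal vertices $\mathbf{u}$ and $\mathbf{v}$ of $Q$.
   Context: $Q-Q=\{\mathbf{x}-\mathbf{y}:\mathbf{x},\mathbf{y}\in Q\}$ and $Q-\mathbf{k}=\{\mathbf{x}-\mathbf{k}:\mathbf{x}\in Q\}$. A vector $\mathbf{k}\in Q-Q$ is uniquely formed if there is a unique pair $\mathbf{s}_1,\mathbf{s}_2\in Q$ with $\mathbf{s}_1-\mathbf{s}_2=\mathbf{k}$. Two vertices $\mathbf{u},\mathbf{v}$ of a convex polytope $Q$ are strictly antipodal if there exist parallel supporting hyperplanes $H_1,H_2$ of $Q$ with $H_1\cap Q=\{\mathbf{u}\}$ and $H_2 \cap Q = \{\mathbf{v}\}$. The supporting cone of $Q$ at a vertex $\mathbf{v}$ is $C(\mathbf{v}) = \mathbf{v} + \bigcup_{\lambda \ge 0}\lambda(Q - \mathbf{v})$. A convex polytope $Q$ with $m$ vertices is locally point symmetric if its vertices can be partitioned into $m/2$ pairs of strictly antipodal vertices such that for each pair $\{\mathbf{u},\mathbf{v}\}$, $C(\mathbf{u}) - \mathbf{u} = \mathbf{v} - C(\mathbf{v})$. *)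

theory Defs
  imports "HOL-Analysis.Analysis" "HOL-Library.Disjoint_Sets"
begin

definition diff_set :: "'a::real_vector set \<Rightarrow> 'a set" where
  "diff_set Q = {x - y | x y. x \<in> Q \<and> y \<in> Q}"

definition translate_neg :: "'a::real_vector set \<Rightarrow> 'a \<Rightarrow> 'a set" where
  "translate_neg Q k = {x - k | x. x \<in> Q}"

definition vertices :: "'a::real_vector set \<Rightarrow> 'a set" where
  "vertices Q = {v. v extreme_point_of Q}"

definition uniquely_formed :: "'a::real_vector set \<Rightarrow> 'a \<Rightarrow> bool" where
  "uniquely_formed Q k \<longleftrightarrow> (\<exists>!p. fst p \<in> Q \<and> snd p \<in> Q \<and> fst p - snd p = k)"

definition supp_hyperplane :: "'a::euclidean_space set \<Rightarrow> 'a \<Rightarrow> real \<Rightarrow> bool" where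
  "supp_hyperplane Q a b \<longleftrightarrow> a \<noteq> 0 \<and> (\<forall>x\<in>Q. a \<bullet> x \<le> b) \<and> (\<exists>x\<in>Q. a \<bullet> x = b)"

text \<open>Strictly antipodal vertices: parallel supporting hyperplanes H1 = {a.x = b1},
  H2 = {(-a).x = b2} (Q lies between them) with H1 \<inter> Q = {u}, H2 \<inter> Q = {v}.\<close>
definition strictly_antipodal :: "'a::euclidean_space set \<Rightarrow> 'a \<Rightarrow> 'a \<Rightarrow> bool" where
  "strictly_antipodal Q u v \<longleftrightarrow>
     u \<in> vertices Q \<and> v \<in> vertices Q \<and>
     (\<exists>a b1 b2. supp_hyperplane Q a b1 \<and> supp_hyperplane Q (- a) b2 \<and>
        {x. a \<bullet> x = b1} \<inter> Q = {u} \<and> {x. (- a) \<bullet> x = b2} \<inter> Q = {v})"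

definition supp_cone :: "'a::real_vector set \<Rightarrow> 'a \<Rightarrow> 'a set" where
  "supp_cone Q v = {v + c *\<^sub>R (x - v) | c x. c \<ge> 0 \<and> x \<in> Q}"

definition locally_point_symmetric :: "'a::euclidean_space set \<Rightarrow> bool" where
  "locally_point_symmetric Q \<longleftrightarrow> polytope Q \<and>
     (\<exists>P. partition_on (vertices Q) P \<and>
        (\<forall>p\<in>P. \<exists>u v. p = {u, v} \<and> u \<noteq> v \<and> strictly_antipodal Q u v \<and>
           {c - u | c. c \<in> supp_cone Q u} = {v - c | c. c \<in> supp_cone Q v}))"

end

theory Submission
  imports Defs
begin

text \<open>
  If \<open>Q \<inter> (Q - k) = {x}\<close>, then no nonzero direction can be followed a small positive distance
  inside \<open>Q\<close> both from \<open>x\<close> and from \<open>x + k\<close>, since otherwise the intersection would grow.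
  Every point of a polytope can be pushed a little away from some vertex; say \<open>x\<close> away from \<open>w\<close>
  and \<open>x + k\<close> away from \<open>u\<close>. Then every direction \<open>y - w\<close> (\<open>y \<in> Q\<close>) is available at \<open>x\<close> and every
  \<open>y - u\<close> at \<open>x + k\<close>. Local point symmetry reflects the cone at \<open>w\<close> onto the cone at its antipode
  \<open>w'\<close>, so every direction \<open>w' - y\<close> is available at \<open>x\<close> as well. Comparing directions forces
  \<open>u = w'\<close>, \<open>x + k = w'\<close> and \<open>x = w\<close>, i.e. \<open>k = w' - w\<close>. Conversely, the functional separating
  a strictly antipodal pair \<open>u, v\<close> is maximised on \<open>Q - Q\<close> only at \<open>u - v\<close>, and an extreme point
  \<open>k\<close> of \<open>Q - Q\<close> cannot be the midpoint of two distinct differences \<open>(y + k) - y'\<close>, \<open>(y' + k) - y\<close>.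
\<close>

lemma mem_translate_neg [simp]: "y \<in> translate_neg Q k \<longleftrightarrow> y + k \<in> Q"
  unfolding translate_neg_def by (auto intro!: exI[of _ "y + k"])

lemma mem_diff_set: "z \<in> diff_set Q \<longleftrightarrow> (\<exists>x\<in>Q. \<exists>y\<in>Q. z = x - y)"
  unfolding diff_set_def by auto

lemma convex_diff_set: "convex Q \<Longrightarrow> convex (diff_set Q)"
proof -
  assume "convex Q"
  moreover have "diff_set Q = (\<Union>x\<in>Q. \<Union>y\<in>Q. {x - y})"
    unfolding diff_set_def by blast
  ultimately show ?thesis
    by (simp add: convex_differences)
qed

lemma polytope_eq_convex_hull_vertices:
  fixes Q :: "'a::euclidean_space set"
  assumes "polytope Q"
  shows "finite (vertices Q)" "Q = convex hull (vertices Q)"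
proof -
  obtain S where "finite S" "Q = convex hull S"
    using assms unfolding polytope_def by blast
  then show "Q = convex hull (vertices Q)"
    unfolding vertices_def using Krein_Milman_polytope by blast
  show "finite (vertices Q)"
    unfolding vertices_def by (rule finite_polyhedron_extreme_points[OF polytope_imp_polyhedron[OF assms]])
qed

lemma vertices_subset: "vertices Q \<subseteq> Q"
  unfolding vertices_def extreme_point_of_def by blast

subsection \<open>Feasible directions\<close>

definition feasible_direction :: "'a::real_vector set \<Rightarrow> 'a \<Rightarrow> 'a \<Rightarrow> bool" where
  "feasible_direction S p d \<longleftrightarrow> (\<exists>t>0. p + t *\<^sub>R d \<in> S)"

lemma convex_shorter_step:
  assumes "convex S" "p \<in> S" "p + t *\<^sub>R d \<in> S" "0 \<le> s" "s \<le> t"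
  shows "p + s *\<^sub>R d \<in> S"
proof (cases "t = 0")
  case True
  then show ?thesis using assms by simp
next
  case False
  then have "t > 0" using assms(4,5) by simp
  then have "0 \<le> s / t" "s / t \<le> 1" using assms(4,5) by auto
  then have "(1 - s / t) *\<^sub>R p + (s / t) *\<^sub>R (p + t *\<^sub>R d) \<in> S"
    using assms(1-3) by (simp add: convexD)
  moreover have "(1 - s / t) *\<^sub>R p + (s / t) *\<^sub>R (p + t *\<^sub>R d) = p + s *\<^sub>R d"
    using \<open>t > 0\<close> by (simp add: algebra_simps)
  ultimately show ?thesis by simp
qed

lemma feasible_direction_diff: "y \<in> S \<Longrightarrow> feasible_direction S p (y - p)"
  unfolding feasible_direction_def by (intro exI[of _ 1]) simp

lemma feasible_direction_scaleR:
  assumes "p \<in> S" "feasible_direction S p d" "0 \<le> c"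
  shows "feasible_direction S p (c *\<^sub>R d)"
proof (cases "c = 0")
  case True
  then show ?thesis using assms(1) unfolding feasible_direction_def by (intro exI[of _ 1]) simp
next
  case False
  obtain t where "t > 0" "p + t *\<^sub>R d \<in> S"
    using assms(2) unfolding feasible_direction_def by blast
  moreover have "p + (t / c) *\<^sub>R (c *\<^sub>R d) = p + t *\<^sub>R d"
    using False by simp
  ultimately show ?thesis
    using False assms(3) unfolding feasible_direction_def by (intro exI[of _ "t / c"]) auto
qed

lemma feasible_direction_away:
  assumes "convex S" "feasible_direction S p (p - z)" "y \<in> S"
  shows "feasible_direction S p (y - z)"
proof -
  obtain e where e: "e > 0" "p + e *\<^sub>R (p - z) \<in> S"
    using assms(2) unfolding feasible_direction_def by blast
  define t where "t = e / (1 + e)"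
  have t: "0 < t" "t < 1" "(1 - t) * e = t"
    using e(1) by (auto simp: t_def field_simps)
  have "p + t *\<^sub>R (y - z) = (1 - t) *\<^sub>R p + ((1 - t) * e) *\<^sub>R (p - z) + t *\<^sub>R y"
    unfolding t(3) by (simp add: algebra_simps)
  also have "\<dots> = (1 - t) *\<^sub>R (p + e *\<^sub>R (p - z)) + t *\<^sub>R y"
    by (simp add: scaleR_add_right)
  also have "\<dots> \<in> S"
    using assms(1,3) e(2) t(1,2) by (simp add: convexD)
  finally have "p + t *\<^sub>R (y - z) \<in> S" .
  then show ?thesis
    using t(1) unfolding feasible_direction_def by blast
qed

lemma feasible_direction_away_from_some_point:
  fixes V :: "'a::real_vector set"
  assumes "finite V" "s \<in> convex hull V"
  shows "\<exists>z\<in>V. feasible_direction (convex hull V) s (s - z)"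
proof -
  obtain u where u: "\<forall>x\<in>V. 0 \<le> u x" "sum u V = 1" "(\<Sum>x\<in>V. u x *\<^sub>R x) = s"
    using assms by (auto simp: convex_hull_finite)
  obtain z where z: "z \<in> V" "u z > 0"
    using u(1,2) by (metis order_le_less sum.neutral zero_neq_one)
  define e where "e = u z"
  \<comment> \<open>the weights \<open>(1 + e) u - e \<delta>\<^sub>z\<close> represent \<open>s + e (s - z)\<close>; they stay nonnegative as \<open>e = u z\<close>\<close>
  define w where "w x = (1 + e) * u x - (if x = z then e else 0)" for x
  have "(\<Sum>x\<in>V. w x *\<^sub>R x)
      = (\<Sum>x\<in>V. (1 + e) *\<^sub>R (u x *\<^sub>R x) - (if x = z then e *\<^sub>R z else 0))"
    by (rule sum.cong) (auto simp: w_def algebra_simps)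
  also have "\<dots> = (1 + e) *\<^sub>R (\<Sum>x\<in>V. u x *\<^sub>R x) - e *\<^sub>R z"
    using assms(1) z(1) by (simp add: sum_subtractf scaleR_sum_right sum.delta')
  finally have "(\<Sum>x\<in>V. w x *\<^sub>R x) = s + e *\<^sub>R (s - z)"
    by (simp add: u(3) algebra_simps)
  moreover have "\<forall>x\<in>V. 0 \<le> w x"
    using u(1) z(2) by (auto simp: w_def e_def algebra_simps)
  moreover have "sum w V = 1"
    using assms(1) z(1) u(2)
    by (simp add: w_def sum_subtractf sum_distrib_left[symmetric] sum.delta')
  ultimately have "s + e *\<^sub>R (s - z) \<in> convex hull V"
    using assms(1) by (auto simp: convex_hull_finite)
  then show ?thesis
    using z unfolding feasible_direction_def e_def by blast
qed

lemma common_feasible_direction_eq_0: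
  assumes "convex Q" "Q \<inter> translate_neg Q k = {x}"
    and "feasible_direction Q x d" "feasible_direction Q (x + k) d"
  shows "d = 0"
proof -
  have "x \<in> Q \<inter> translate_neg Q k"
    using assms(2) by simp
  then have x: "x \<in> Q" "x + k \<in> Q"
    by simp_all
  obtain t1 t2 where t: "t1 > 0" "x + t1 *\<^sub>R d \<in> Q" "t2 > 0" "x + k + t2 *\<^sub>R d \<in> Q"
    using assms(3,4) unfolding feasible_direction_def by blast
  define t where "t = min t1 t2"
  have "x + t *\<^sub>R d \<in> Q"
    by (rule convex_shorter_step[OF assms(1) x(1) t(2)]) (use t(1,3) in \<open>auto simp: t_def\<close>)
  moreover have "x + k + t *\<^sub>R d \<in> Q"
    by (rule convex_shorter_step[OF assms(1) x(2) t(4)]) (use t(1,3) in \<open>auto simp: t_def\<close>)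
  ultimately have "x + t *\<^sub>R d \<in> Q \<inter> translate_neg Q k"
    by (simp add: algebra_simps)
  then have "t *\<^sub>R d = 0"
    using assms(2) by simp
  moreover have "t > 0"
    using t(1,3) by (simp add: t_def)
  ultimately show ?thesis
    by simp
qed

subsection \<open>Antipodes and supporting cones\<close>

lemma strictly_antipodal_sym: "strictly_antipodal Q u v \<Longrightarrow> strictly_antipodal Q v u"
  unfolding strictly_antipodal_def by (metis minus_minus)

lemma strictly_antipodal_max_diff:
  assumes "strictly_antipodal Q u v"
  obtains a where "u \<in> Q" "v \<in> Q"
    "\<And>x y. x \<in> Q \<Longrightarrow> y \<in> Q \<Longrightarrow> a \<bullet> (x - y) \<le> a \<bullet> (u - v)"
    "\<And>x y. x \<in> Q \<Longrightarrow> y \<in> Q \<Longrightarrow> a \<bullet> (x - y) = a \<bullet> (u - v) \<Longrightarrow> x = u \<and> y = v"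
proof -
  obtain a b1 b2 where h: "supp_hyperplane Q a b1" "supp_hyperplane Q (- a) b2"
    "{x. a \<bullet> x = b1} \<inter> Q = {u}" "{x. (- a) \<bullet> x = b2} \<inter> Q = {v}"
    using assms unfolding strictly_antipodal_def by blast
  have le: "a \<bullet> x \<le> b1" "(- a) \<bullet> x \<le> b2" if "x \<in> Q" for x
    using h(1,2) that unfolding supp_hyperplane_def by blast+
  have uv: "u \<in> Q" "v \<in> Q" "a \<bullet> u = b1" "(- a) \<bullet> v = b2"
    using h(3,4) by blast+
  show thesis
  proof (rule that[of a])
    fix x y assume "x \<in> Q" "y \<in> Q"
    then show "a \<bullet> (x - y) \<le> a \<bullet> (u - v)"
      using le[OF \<open>x \<in> Q\<close>] le[OF \<open>y \<in> Q\<close>] uv by (simp add: inner_diff_right)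
    assume "a \<bullet> (x - y) = a \<bullet> (u - v)"
    then have "a \<bullet> x = b1" "(- a) \<bullet> y = b2"
      using le[OF \<open>x \<in> Q\<close>] le[OF \<open>y \<in> Q\<close>] uv by (simp_all add: inner_diff_right)
    then show "x = u \<and> y = v"
      using h(3,4) \<open>x \<in> Q\<close> \<open>y \<in> Q\<close> by blast
  qed (use uv in auto)
qed

lemma supp_cone_diff_eq_swap:
  assumes "{c - u | c. c \<in> supp_cone Q u} = {v - c | c. c \<in> supp_cone Q v}"
  shows "{c - v | c. c \<in> supp_cone Q v} = {u - c | c. c \<in> supp_cone Q u}"
proof -
  have "uminus ` {c - u | c. c \<in> supp_cone Q u} = {u - c | c. c \<in> supp_cone Q u}"
       "uminus ` {v - c | c. c \<in> supp_cone Q v} = {c - v | c. c \<in> supp_cone Q v}"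
    by (force simp: image_iff)+
  then show ?thesis
    using assms by metis
qed

lemma supp_cone_diff_eq_reflect:
  assumes "{c - u | c. c \<in> supp_cone Q u} = {v - c | c. c \<in> supp_cone Q v}" "y \<in> Q"
  shows "\<exists>m\<ge>0. \<exists>y'\<in>Q. u - y = m *\<^sub>R (y' - v)"
proof -
  have "y \<in> supp_cone Q u"
    unfolding supp_cone_def using assms(2) by (auto intro!: exI[of _ "1::real"] exI[of _ y])
  then have "y - u \<in> {v - c | c. c \<in> supp_cone Q v}"
    using assms(1) by force
  then obtain m y' where "m \<ge> 0" "y' \<in> Q" "y - u = v - (v + m *\<^sub>R (y' - v))"
    unfolding supp_cone_def by blast
  then show ?thesis
    by (metis add_diff_cancel_left' minus_diff_eq scaleR_minus_right diff_0)
qed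

lemma feasible_direction_toward_antipode:
  assumes "convex Q" "{c - u | c. c \<in> supp_cone Q u} = {v - c | c. c \<in> supp_cone Q v}"
    and "p \<in> Q" "feasible_direction Q p (p - v)" "y \<in> Q"
  shows "feasible_direction Q p (u - y)"
proof -
  obtain m y' where "m \<ge> 0" "y' \<in> Q" "u - y = m *\<^sub>R (y' - v)"
    using supp_cone_diff_eq_reflect[OF assms(2,5)] by blast
  then show ?thesis
    using feasible_direction_scaleR[OF assms(3) feasible_direction_away[OF assms(1,4)]] by simp
qed

lemma locally_point_symmetric_antipode:
  assumes "locally_point_symmetric Q" "w \<in> vertices Q"
  obtains w' where "strictly_antipodal Q w' w"
    "{c - w' | c. c \<in> supp_cone Q w'} = {w - c | c. c \<in> supp_cone Q w}"
proof -
  obtain P where P: "partition_on (vertices Q) P"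
    and pairs: "\<forall>p\<in>P. \<exists>u v. p = {u, v} \<and> u \<noteq> v \<and> strictly_antipodal Q u v \<and>
                   {c - u | c. c \<in> supp_cone Q u} = {v - c | c. c \<in> supp_cone Q v}"
    using assms(1) unfolding locally_point_symmetric_def by blast
  obtain p where "p \<in> P" "w \<in> p"
    using partition_onD1[OF P] assms(2) by blast
  from bspec[OF pairs \<open>p \<in> P\<close>] obtain u v where "p = {u, v}" "strictly_antipodal Q u v"
    and cones: "{c - u | c. c \<in> supp_cone Q u} = {v - c | c. c \<in> supp_cone Q v}"
    by blast
  then consider "w = v" | "w = u"
    using \<open>w \<in> p\<close> by blast
  then show thesis
  proof cases
    case 1
    then show thesis
      using that[of u] \<open>strictly_antipodal Q u v\<close> cones by simp
  next
    case 2
    then show thesis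
      using that[of v] strictly_antipodal_sym[OF \<open>strictly_antipodal Q u v\<close>]
        supp_cone_diff_eq_swap[OF cones] by simp
  qed
qed

lemma unique_intersection_imp_strictly_antipodal:
  assumes Q: "locally_point_symmetric Q" and x: "Q \<inter> translate_neg Q k = {x}"
  shows "\<exists>u v. strictly_antipodal Q u v \<and> k = u - v"
proof -
  have "polytope Q"
    using Q unfolding locally_point_symmetric_def by blast
  note hull = polytope_eq_convex_hull_vertices[OF this]
  have conv: "convex Q"
    by (rule polytope_imp_convex[OF \<open>polytope Q\<close>])
  have away: "\<exists>z\<in>vertices Q. feasible_direction Q p (p - z)" if "p \<in> Q" for p
    using feasible_direction_away_from_some_point[OF hull(1), of p] that hull(2)[symmetric] by simp
  have "x \<in> Q \<inter> translate_neg Q k"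
    using x by simp
  then have xQ: "x \<in> Q" "x + k \<in> Q"
    by simp_all
  obtain w where w: "w \<in> Q" "w \<in> vertices Q" "feasible_direction Q x (x - w)"
    using away[OF xQ(1)] vertices_subset by blast
  obtain u where u: "u \<in> Q" "feasible_direction Q (x + k) (x + k - u)"
    using away[OF xQ(2)] vertices_subset by blast
  obtain w' where w': "strictly_antipodal Q w' w"
    and cones: "{c - w' | c. c \<in> supp_cone Q w'} = {w - c | c. c \<in> supp_cone Q w}"
    using locally_point_symmetric_antipode[OF Q w(2)] by blast
  have w'Q: "w' \<in> Q"
    using w' vertices_subset unfolding strictly_antipodal_def by blast
  note toward_w' = feasible_direction_toward_antipode[OF conv cones xQ(1) w(3)]
  note eq_0 = common_feasible_direction_eq_0[OF conv x]
  have "w' - u = 0"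
    by (rule eq_0[OF toward_w'[OF u(1)] feasible_direction_away[OF conv u(2) w'Q]])
  then have "feasible_direction Q (x + k) (x + k - w')"
    using u(2) by simp
  note toward_w = feasible_direction_toward_antipode[OF conv supp_cone_diff_eq_swap[OF cones] xQ(2) this]
  have "w' - (x + k) = 0"
    by (rule eq_0[OF toward_w'[OF xQ(2)] feasible_direction_diff[OF w'Q]])
  moreover have "w - x = 0"
    by (rule eq_0[OF feasible_direction_diff[OF w(1)] toward_w[OF xQ(1)]])
  ultimately have "k = w' - w"
    by (simp add: algebra_simps)
  then show ?thesis
    using w' by blast
qed

lemma strictly_antipodal_imp_vertex_diff_set:
  assumes "convex Q" "strictly_antipodal Q u v"
  shows "u - v \<in> vertices (diff_set Q)"
proof -
  obtain a where uv: "u \<in> Q" "v \<in> Q"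
    and le: "\<And>x y. x \<in> Q \<Longrightarrow> y \<in> Q \<Longrightarrow> a \<bullet> (x - y) \<le> a \<bullet> (u - v)"
    and eq: "\<And>x y. x \<in> Q \<Longrightarrow> y \<in> Q \<Longrightarrow> a \<bullet> (x - y) = a \<bullet> (u - v) \<Longrightarrow> x = u \<and> y = v"
    using strictly_antipodal_max_diff[OF assms(2)] by blast
  have "diff_set Q \<inter> {z. a \<bullet> z = a \<bullet> (u - v)} face_of diff_set Q"
    using le by (intro face_of_Int_supporting_hyperplane_le convex_diff_set assms(1))
      (auto simp: mem_diff_set)
  moreover have "diff_set Q \<inter> {z. a \<bullet> z = a \<bullet> (u - v)} = {u - v}"
    using eq uv by (fastforce simp: mem_diff_set)
  ultimately show ?thesis
    by (simp add: vertices_def flip: face_of_singleton)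
qed

lemma vertex_diff_set_imp_unique_intersection:
  assumes "k \<in> vertices (diff_set Q)" "x \<in> Q" "x + k \<in> Q"
  shows "Q \<inter> translate_neg Q k = {x}"
proof (rule ccontr)
  assume "Q \<inter> translate_neg Q k \<noteq> {x}"
  moreover have "x \<in> Q \<inter> translate_neg Q k"
    using assms(2,3) by simp
  ultimately obtain y where "y \<in> Q \<inter> translate_neg Q k" "y \<noteq> x"
    by blast
  then have y: "y \<in> Q" "y + k \<in> Q" "y \<noteq> x"
    by simp_all
  have "(y + k) - x \<in> diff_set Q" "(x + k) - y \<in> diff_set Q"
    using assms(2,3) y by (auto simp: mem_diff_set)
  moreover have "k \<in> open_segment ((y + k) - x) ((x + k) - y)"
  proof -
    have "(y + k) - x \<noteq> (x + k) - y"
    proof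
      assume "(y + k) - x = (x + k) - y"
      then have "2 *\<^sub>R (y - x) = 0"
        by (simp add: scaleR_2 algebra_simps eq_diff_eq)
      then show False
        using y(3) by simp
    qed
    then have "midpoint ((y + k) - x) ((x + k) - y) \<in> open_segment ((y + k) - x) ((x + k) - y)"
      by (simp add: midpoint_in_open_segment)
    moreover have "midpoint ((y + k) - x) ((x + k) - y) = k"
      unfolding midpoint_def by (simp add: scaleR_2 algebra_simps flip: scaleR_add_right)
    ultimately show ?thesis
      by simp
  qed
  ultimately show False
    using assms(1) unfolding vertices_def extreme_point_of_def by blast
qed

lemma ex_singleton_iff_ex1: "(\<exists>x. A = {x}) \<longleftrightarrow> (\<exists>!x. x \<in> A)"
  by auto

lemma unique_intersection_iff_uniquely_formed:
  "(\<exists>x. Q \<inter> translate_neg Q k = {x}) \<longleftrightarrow> uniquely_formed Q k"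
proof -
  have "(\<exists>x. Q \<inter> translate_neg Q k = {x}) \<longleftrightarrow> (\<exists>!y. y \<in> Q \<inter> translate_neg Q k)"
    using ex_singleton_iff_ex1 .
  also have "\<dots> \<longleftrightarrow> (\<exists>!y. y \<in> Q \<and> y + k \<in> Q)"
    by simp
  also have "\<dots> \<longleftrightarrow> (\<exists>!p. fst p \<in> Q \<and> snd p \<in> Q \<and> fst p - snd p = k)"
  proof
    assume "\<exists>!y. y \<in> Q \<and> y + k \<in> Q"
    then obtain y where y: "y \<in> Q" "y + k \<in> Q"
      and uniq: "\<And>y'. y' \<in> Q \<Longrightarrow> y' + k \<in> Q \<Longrightarrow> y' = y"
      by blast
    show "\<exists>!p. fst p \<in> Q \<and> snd p \<in> Q \<and> fst p - snd p = k"
    proof (rule ex1I[of _ "(y + k, y)"])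
      fix p assume p: "fst p \<in> Q \<and> snd p \<in> Q \<and> fst p - snd p = k"
      then have "fst p = snd p + k"
        by (metis add.commute diff_add_cancel)
      with p uniq show "p = (y + k, y)"
        by (simp add: prod_eq_iff)
    qed (use y in simp)
  next
    assume "\<exists>!p. fst p \<in> Q \<and> snd p \<in> Q \<and> fst p - snd p = k"
    then obtain p where p: "fst p \<in> Q" "snd p \<in> Q" "fst p - snd p = k"
      and uniq: "\<And>p'. fst p' \<in> Q \<Longrightarrow> snd p' \<in> Q \<Longrightarrow> fst p' - snd p' = k \<Longrightarrow> p' = p"
      by blast
    have "fst p = snd p + k"
      using p(3) by (metis add.commute diff_add_cancel)
    show "\<exists>!y. y \<in> Q \<and> y + k \<in> Q"
    proof (rule ex1I[of _ "snd p"])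
      fix y assume "y \<in> Q \<and> y + k \<in> Q"
      then have "(y + k, y) = p"
        by (intro uniq) simp_all
      then show "y = snd p"
        by auto
    qed (use p \<open>fst p = snd p + k\<close> in simp)
  qed
  finally show ?thesis
    unfolding uniquely_formed_def .
qed

theorem lemma13:
  fixes Q :: "'a::euclidean_space set" and k :: 'a
  assumes "locally_point_symmetric Q"
    and "k \<in> diff_set Q"
  shows "((\<exists>x. Q \<inter> translate_neg Q k = {x}) \<longleftrightarrow> k \<in> vertices (diff_set Q))
       \<and> (k \<in> vertices (diff_set Q) \<longleftrightarrow> (\<exists>u v. strictly_antipodal Q u v \<and> k = u - v))
       \<and> ((\<exists>x. Q \<inter> translate_neg Q k = {x}) \<longleftrightarrow> uniquely_formed Q k)"
proof -
  have "convex Q"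
    using assms(1) polytope_imp_convex unfolding locally_point_symmetric_def by blast
  obtain x where "x \<in> Q" "x + k \<in> Q"
    using assms(2) by (force simp: mem_diff_set)
  then have "k \<in> vertices (diff_set Q) \<Longrightarrow> \<exists>x. Q \<inter> translate_neg Q k = {x}"
    using vertex_diff_set_imp_unique_intersection by blast
  moreover have "(\<exists>x. Q \<inter> translate_neg Q k = {x}) \<Longrightarrow> \<exists>u v. strictly_antipodal Q u v \<and> k = u - v"
    using unique_intersection_imp_strictly_antipodal[OF assms(1)] by blast
  moreover have "(\<exists>u v. strictly_antipodal Q u v \<and> k = u - v) \<Longrightarrow> k \<in> vertices (diff_set Q)"
    using strictly_antipodal_imp_vertex_diff_set[OF \<open>convex Q\<close>] by blast
  ultimately show ?thesis
    using unique_intersection_iff_uniquely_formed by blast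
qed

end
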